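(* For all $0\le M\le M'<1$ and all constructible Reeb graphs $\mathcal{R}_f,\mathcal{R}_g$, $$d_I^M(\mathcal{R}_f,\mathcal{R}_g)\le d_I^{M'}(\mathcal{R}_f,\mathcal{R}_g)\le \frac{1-M}{1-M'}\,d_I^M(\mathcal{R}_f,\mathcal{R}_g).$$
   Context: A scalar field is a pair $(\mathbb X,f)$ with $\mathbb X$ a topological space and $f:\mathbb X\to\mathbb R$ continuous. Its Reeb graph $\mathcal R_f=(\mathbb X_f,\tilde f)$ is the quotient of $\mathbb X$ by $x\sim y$ iff $f(x)=f(y)=a$ and $x,y$ lie in the same path component of $f^{-1}(a)$, with $\tilde f$ induced by $f$. $(\mathbb X,f)$ is constructible if there are finitely many values $a_1<\dots<a_n$ such that $\mathbb X$ is homeomorphic to the union of $\mathbb V_i\times\{a_i\}$ and $\mathbb E_i\times[a_i,a_{i+1}]$ glued by continuous attaching maps $\mathbb E_i\times\{a_i\}\to\mathbb V_i$, $\mathbb E_i\times\{a_{i+1}\}\to\mathbb V_{i+1}$, with all $\mathbb V_i,\mathbb E_i$ compact and locally path-connected and $f$ the projection to the second coordinate; its Reeb graph is then a finite graph and is called a constructible Reeb graph. A morphism of Reeb graphs is a continuous function-preserving map ($\tilde f=\tilde g\circ\alpha$). An up-path (down-path) is a path along which $\tilde f$ is monotone non-decreasing (non-increasing); its height is the difference of $\tilde f$ at its endpoints. For $\varepsilon\ge 0$, the smoothing $\mathcal S_\varepsilon(\mathcal R_f)$ is the Reeb graph of $(\mathbb X_f\times[-\varepsilon,\varepsilon],(x,t)\mapsto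 \tilde f(x)+t)$, with the natural maps $\eta:\mathcal S_\varepsilon(\mathcal R_f)\to\mathcal S_{\varepsilon'}(\mathcal R_f)$ for $\varepsilon\le\varepsilon'$ ($\eta$ from $\mathcal R_f=\mathcal S_0$ being $x\mapsto[x,0]$). The truncation $T^\tau(\mathcal R)$ removes from $\mathcal R$ all points that do not have both an up-path and a down-path of height $\tau$ starting at them; $\mathcal S^\tau_\varepsilon=T^\tau\mathcal S_\varepsilon$ (a functor for $0<\tau\le2\varepsilon$), and $\eta$ restricts to maps $\mathcal S^\tau_\varepsilon\to\mathcal S^{\tau'}_{\varepsilon'}$ when $0\le\tau'-\tau\le\varepsilon'-\varepsilon$. For $m\in[0,1]$, an $\varepsilon$-interleaving (truncated, parameter $m$) is a pair of function-preserving maps $\phi:\mathcal R_f\to\mathcal S^{m\varepsilon}_\varepsilon(\mathcal R_g)$, $\psi:\mathcal R_g\to\mathcal S^{m\varepsilon}_\varepsilon(\mathcal R_f)$ with $\mathcal S^{m\varepsilon}_\varepsilon[\psi]\circ\phi=\eta:\mathcal R_f\to\mathcal S^{2m\varepsilon}_{2\varepsilon}(\mathcal R_f)$ and $\mathcal S^{m\varepsilon}_\varepsilon[\phi]\circ\psi=\eta:\mathcal R_g\to\mathcal S^{2m\varepsilon}_{2\varepsilon}(\mathcal R_g)$; $d_I^m(\mathcal R_f,\mathcal R_g)$ is the infimum of such $\varepsilon$. For $m=0$ this is the ordinary interleaving distance $d_I$. *)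

theory Defs
  imports "HOL-Analysis.Analysis"
begin

definition qcls :: "'a topology \<Rightarrow> ('a \<Rightarrow> 'a \<Rightarrow> bool) \<Rightarrow> 'a \<Rightarrow> 'a set" where
  "qcls X R x = {y \<in> topspace X. R x y}"

definition quot_top :: "'a topology \<Rightarrow> ('a \<Rightarrow> 'a \<Rightarrow> bool) \<Rightarrow> 'a set topology" where
  "quot_top X R = topology (\<lambda>U. U \<subseteq> qcls X R ` topspace X \<and>
        openin X {x \<in> topspace X. qcls X R x \<in> U})"

lemma istopology_quot: "istopology (\<lambda>U. U \<subseteq> qcls X R ` topspace X \<and>
        openin X {x \<in> topspace X. qcls X R x \<in> U})"
proof -
  have i: "{x \<in> topspace X. qcls X R x \<in> S \<inter> T} =
           {x \<in> topspace X. qcls X R x \<in> S} \<inter> {x \<in> topspace X. qcls X R x \<in> T}" for S T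
    by auto
  have u: "{x \<in> topspace X. qcls X R x \<in> \<Union>K} =
           (\<Union>S\<in>K. {x \<in> topspace X. qcls X R x \<in> S})" for K
    by auto
  show ?thesis
    unfolding istopology_def i u by (auto intro!: openin_Union)
qed

definition reeb_rel :: "'a topology \<Rightarrow> ('a \<Rightarrow> real) \<Rightarrow> 'a \<Rightarrow> 'a \<Rightarrow> bool" where
  "reeb_rel X f x y \<longleftrightarrow> f x = f y \<and>
      path_component_of (subtopology X {z \<in> topspace X. f z = f x}) x y"

definition reeb_top :: "'a topology \<Rightarrow> ('a \<Rightarrow> real) \<Rightarrow> 'a set topology" where
  "reeb_top X f = quot_top X (reeb_rel X f)"

definition reeb_fn :: "'a topology \<Rightarrow> ('a \<Rightarrow> real) \<Rightarrow> 'a set \<Rightarrow> real" where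
  "reeb_fn X f C = f (SOME x. x \<in> C)"

text \<open>The disjoint union of the pieces V_i x {a_i} (tag False) and
  E_i x [a_i, a_(i+1)] (tag True), indices 0-based: a 0 < ... < a (n-1).\<close>
definition pieces_top ::
  "nat \<Rightarrow> (nat \<Rightarrow> real) \<Rightarrow> (nat \<Rightarrow> 'c topology) \<Rightarrow> (nat \<Rightarrow> 'c topology)
     \<Rightarrow> ((nat \<times> bool) \<times> ('c \<times> real)) topology" where
  "pieces_top n a V E = sum_topology
     (\<lambda>(i,b). if b then prod_topology (E i) (subtopology euclideanreal {a i .. a (Suc i)})
              else prod_topology (V i) (subtopology euclideanreal {a i}))
     ({(i, False) | i. i < n} \<union> {(i, True) | i. Suc i < n})"

text \<open>Elementary identifications given by the attaching maps l_i : E_i -> V_i and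
  r_i : E_i -> V_(i+1).\<close>
definition glue_step ::
  "(nat \<Rightarrow> real) \<Rightarrow> (nat \<Rightarrow> 'c \<Rightarrow> 'c) \<Rightarrow> (nat \<Rightarrow> 'c \<Rightarrow> 'c)
     \<Rightarrow> ((nat \<times> bool) \<times> ('c \<times> real)) \<Rightarrow> ((nat \<times> bool) \<times> ('c \<times> real)) \<Rightarrow> bool" where
  "glue_step a l r p q \<longleftrightarrow>
     (\<exists>i e. p = ((i, True), (e, a i)) \<and> q = ((i, False), (l i e, a i))) \<or>
     (\<exists>i e. p = ((i, True), (e, a (Suc i))) \<and> q = ((Suc i, False), (r i e, a (Suc i))))"

definition glue_rel ::
  "(nat \<Rightarrow> real) \<Rightarrow> (nat \<Rightarrow> 'c \<Rightarrow> 'c) \<Rightarrow> (nat \<Rightarrow> 'c \<Rightarrow> 'c)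
     \<Rightarrow> ((nat \<times> bool) \<times> ('c \<times> real)) \<Rightarrow> ((nat \<times> bool) \<times> ('c \<times> real)) \<Rightarrow> bool" where
  "glue_rel a l r = (\<lambda>p q. glue_step a l r p q \<or> glue_step a l r q p)\<^sup>*\<^sup>*"

definition glued_top ::
  "nat \<Rightarrow> (nat \<Rightarrow> real) \<Rightarrow> (nat \<Rightarrow> 'c topology) \<Rightarrow> (nat \<Rightarrow> 'c topology)
     \<Rightarrow> (nat \<Rightarrow> 'c \<Rightarrow> 'c) \<Rightarrow> (nat \<Rightarrow> 'c \<Rightarrow> 'c)
     \<Rightarrow> ((nat \<times> bool) \<times> ('c \<times> real)) set topology" where
  "glued_top n a V E l r = quot_top (pieces_top n a V E) (glue_rel a l r)"

definition glued_proj :: "((nat \<times> bool) \<times> ('c \<times> real)) set \<Rightarrow> real" where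
  "glued_proj C = snd (snd (SOME p. p \<in> C))"

text \<open>(X,f) is a constructible scalar field whose pieces V_i, E_i are spaces on type 'c.\<close>
definition constructible :: "'c itself \<Rightarrow> 'a topology \<Rightarrow> ('a \<Rightarrow> real) \<Rightarrow> bool" where
  "constructible (_::'c itself) X f \<longleftrightarrow>
     continuous_map X euclideanreal f \<and>
     (\<exists>n a (V :: nat \<Rightarrow> 'c topology) (E :: nat \<Rightarrow> 'c topology) l r h.
        (\<forall>i. Suc i < n \<longrightarrow> a i < a (Suc i)) \<and>
        (\<forall>i<n. compact_space (V i) \<and> locally_path_connected_space (V i)) \<and>
        (\<forall>i. Suc i < n \<longrightarrow> compact_space (E i) \<and> locally_path_connected_space (E i) \<and>
               continuous_map (E i) (V i) (l i) \<and> continuous_map (E i) (V (Suc i)) (r i)) \<and>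
        homeomorphic_map X (glued_top n a V E l r) h \<and>
        (\<forall>x\<in>topspace X. f x = glued_proj (h x)))"

definition smooth_space :: "'p topology \<Rightarrow> real \<Rightarrow> ('p \<times> real) topology" where
  "smooth_space T e = prod_topology T (subtopology euclideanreal {-e..e})"

definition smooth_f :: "('p \<Rightarrow> real) \<Rightarrow> 'p \<times> real \<Rightarrow> real" where
  "smooth_f F = (\<lambda>(x,t). F x + t)"

definition smooth_top :: "'p topology \<Rightarrow> ('p \<Rightarrow> real) \<Rightarrow> real \<Rightarrow> ('p \<times> real) set topology" where
  "smooth_top T F e = reeb_top (smooth_space T e) (smooth_f F)"

definition smooth_fn :: "'p topology \<Rightarrow> ('p \<Rightarrow> real) \<Rightarrow> real \<Rightarrow> ('p \<times> real) set \<Rightarrow> real" where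
  "smooth_fn T F e = reeb_fn (smooth_space T e) (smooth_f F)"

definition smooth_pt :: "'p topology \<Rightarrow> ('p \<Rightarrow> real) \<Rightarrow> real \<Rightarrow> 'p \<Rightarrow> real \<Rightarrow> ('p \<times> real) set" where
  "smooth_pt T F e x t = qcls (smooth_space T e) (reeb_rel (smooth_space T e) (smooth_f F)) (x, t)"

definition up_path :: "'p topology \<Rightarrow> ('p \<Rightarrow> real) \<Rightarrow> (real \<Rightarrow> 'p) \<Rightarrow> bool" where
  "up_path T F g \<longleftrightarrow> pathin T g \<and> (\<forall>s t. 0 \<le> s \<and> s \<le> t \<and> t \<le> 1 \<longrightarrow> F (g s) \<le> F (g t))"

definition down_path :: "'p topology \<Rightarrow> ('p \<Rightarrow> real) \<Rightarrow> (real \<Rightarrow> 'p) \<Rightarrow> bool" where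
  "down_path T F g \<longleftrightarrow> pathin T g \<and> (\<forall>s t. 0 \<le> s \<and> s \<le> t \<and> t \<le> 1 \<longrightarrow> F (g t) \<le> F (g s))"

definition trunc_set :: "'p topology \<Rightarrow> ('p \<Rightarrow> real) \<Rightarrow> real \<Rightarrow> 'p set" where
  "trunc_set T F tau = {p \<in> topspace T.
      (\<exists>g. up_path T F g \<and> g 0 = p \<and> F (g 1) - F p = tau) \<and>
      (\<exists>g. down_path T F g \<and> g 0 = p \<and> F p - F (g 1) = tau)}"

definition tsmooth_top :: "'p topology \<Rightarrow> ('p \<Rightarrow> real) \<Rightarrow> real \<Rightarrow> real \<Rightarrow> ('p \<times> real) set topology" where
  "tsmooth_top T F tau e =
     subtopology (smooth_top T F e) (trunc_set (smooth_top T F e) (smooth_fn T F e) tau)"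

definition to_tsmooth ::
  "'p topology \<Rightarrow> ('p \<Rightarrow> real) \<Rightarrow> 'q topology \<Rightarrow> ('q \<Rightarrow> real) \<Rightarrow> real \<Rightarrow> real
     \<Rightarrow> ('p \<Rightarrow> ('q \<times> real) set) \<Rightarrow> bool" where
  "to_tsmooth T F T' F' m e phi \<longleftrightarrow>
     continuous_map T (tsmooth_top T' F' (m * e) e) phi \<and>
     (\<forall>x\<in>topspace T. smooth_fn T' F' e (phi x) = F x)"

text \<open>The equation S[psi] o phi = eta : (T,F) -> S_(2e)(T,F), written pointwise:
  S[psi] sends [y,t] to [psi y, t], and the canonical identification
  S_e S_e = S_(2e) sends [[z,s],t] to [z,s+t]; eta x = [x,0].\<close>
definition comp_is_eta ::
  "'p topology \<Rightarrow> ('p \<Rightarrow> real) \<Rightarrow> 'q topology \<Rightarrow> ('q \<Rightarrow> real) \<Rightarrow> real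
     \<Rightarrow> ('p \<Rightarrow> ('q \<times> real) set) \<Rightarrow> ('q \<Rightarrow> ('p \<times> real) set) \<Rightarrow> bool" where
  "comp_is_eta T F T' F' e phi psi \<longleftrightarrow>
     (\<forall>x\<in>topspace T. \<forall>y t. y \<in> topspace T' \<and> t \<in> {-e..e} \<and> phi x = smooth_pt T' F' e y t \<longrightarrow>
        (\<forall>z s. z \<in> topspace T \<and> s \<in> {-e..e} \<and> psi y = smooth_pt T F e z s \<longrightarrow>
           smooth_pt T F (2 * e) z (s + t) = smooth_pt T F (2 * e) x 0))"

definition interleaving ::
  "real \<Rightarrow> real \<Rightarrow> 'p topology \<Rightarrow> ('p \<Rightarrow> real) \<Rightarrow> 'q topology \<Rightarrow> ('q \<Rightarrow> real)
     \<Rightarrow> ('p \<Rightarrow> ('q \<times> real) set) \<Rightarrow> ('q \<Rightarrow> ('p \<times> real) set) \<Rightarrow> bool" where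
  "interleaving m e T F T' F' phi psi \<longleftrightarrow>
     to_tsmooth T F T' F' m e phi \<and> to_tsmooth T' F' T F m e psi \<and>
     comp_is_eta T F T' F' e phi psi \<and> comp_is_eta T' F' T F e psi phi"

text \<open>d_I^m, as an extended real (infimum of the empty set is infinity).\<close>
definition trunc_dist ::
  "real \<Rightarrow> 'p topology \<Rightarrow> ('p \<Rightarrow> real) \<Rightarrow> 'q topology \<Rightarrow> ('q \<Rightarrow> real) \<Rightarrow> ereal" where
  "trunc_dist m T F T' F' =
     Inf {ereal e | e. e \<ge> 0 \<and> (\<exists>phi psi. interleaving m e T F T' F' phi psi)}"

end

theory Submission
  imports Defs
begin

text \<open>
  Raising the truncation parameter only shrinks the truncated smoothings, so every
  \<open>M'\<close>-interleaving is an \<open>M\<close>-interleaving of the same height.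
  Conversely, post-compose an \<open>M\<close>-interleaving \<open>(\<phi>, \<psi>)\<close> of height \<open>\<epsilon>\<close> with the natural
  maps \<open>\<eta>\<close> into the smoothings of height \<open>\<epsilon>' = (1 - M) / (1 - M') \<epsilon>\<close>. Prolonging up- and
  down-paths vertically, \<open>\<eta>\<close> raises the truncation height by \<open>\<epsilon>' - \<epsilon>\<close>, and
  \<open>M \<epsilon> + (\<epsilon>' - \<epsilon>) = M' \<epsilon>'\<close>. The composition identities survive: a level path in
  \<open>S\<^sub>\<epsilon>\<^sub>'(R\<^sub>g)\<close> is mapped by \<open>\<psi>\<close> to a path in \<open>S\<^sub>\<epsilon>(R\<^sub>f)\<close> whose values stay within
  \<open>\<epsilon>'\<close> of one level; as \<open>R\<^sub>f\<close> is locally path connected, the representatives along it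
  stay in one path component of an open band of width \<open>4 \<epsilon>'\<close> around that level, and this
  is exactly what an identification in \<open>S\<^sub>2\<^sub>\<epsilon>\<^sub>'(R\<^sub>f)\<close> requires.
\<close>

section \<open>Quotient topologies and Reeb graphs\<close>

lemma openin_quot_top:
  "openin (quot_top X R) U \<longleftrightarrow>
     U \<subseteq> qcls X R ` topspace X \<and> openin X {x \<in> topspace X. qcls X R x \<in> U}"
  unfolding quot_top_def using istopology_quot[of X R] by (simp add: topology_inverse')

lemma topspace_quot_top: "topspace (quot_top X R) = qcls X R ` topspace X"
proof -
  have "{x \<in> topspace X. qcls X R x \<in> qcls X R ` topspace X} = topspace X" by auto
  then have "openin (quot_top X R) (qcls X R ` topspace X)"
    unfolding openin_quot_top by simp
  moreover have "topspace (quot_top X R) \<subseteq> qcls X R ` topspace X"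
    using openin_quot_top[of X R "topspace (quot_top X R)"] by simp
  ultimately show ?thesis using openin_subset by blast
qed

lemma quotient_map_qcls: "quotient_map X (quot_top X R) (qcls X R)"
  unfolding quotient_map_def topspace_quot_top openin_quot_top by auto

lemma continuous_map_qcls: "continuous_map X (quot_top X R) (qcls X R)"
  using quotient_map_qcls quotient_imp_continuous_map by blast

lemma locally_path_connected_space_quot_top:
  "locally_path_connected_space X \<Longrightarrow> locally_path_connected_space (quot_top X R)"
  using quotient_map_qcls locally_path_connected_space_quotient_map_image by blast

lemma mem_qcls: "y \<in> qcls X R x \<longleftrightarrow> y \<in> topspace X \<and> R x y"
  by (simp add: qcls_def)

lemma reeb_rel_refl: "x \<in> topspace X \<Longrightarrow> reeb_rel X f x x"
  unfolding reeb_rel_def by (simp add: path_component_of_refl)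

lemma reeb_rel_sym:
  assumes "reeb_rel X f x y"
  shows "reeb_rel X f y x"
proof -
  have "f x = f y" "path_component_of (subtopology X {z \<in> topspace X. f z = f x}) x y"
    using assms unfolding reeb_rel_def by auto
  then show ?thesis unfolding reeb_rel_def using path_component_of_sym by fastforce
qed

lemma reeb_rel_trans:
  assumes "reeb_rel X f x y" "reeb_rel X f y z"
  shows "reeb_rel X f x z"
proof -
  have "f x = f y" "path_component_of (subtopology X {w \<in> topspace X. f w = f x}) x y"
     "f y = f z" "path_component_of (subtopology X {w \<in> topspace X. f w = f y}) y z"
    using assms unfolding reeb_rel_def by auto
  then show ?thesis unfolding reeb_rel_def using path_component_of_trans by fastforce
qed

lemma reeb_rel_imp_topspace: "reeb_rel X f x y \<Longrightarrow> x \<in> topspace X \<and> y \<in> topspace X"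
  unfolding reeb_rel_def using path_component_in_topspace by fastforce

lemma reeb_rel_imp_eq: "reeb_rel X f x y \<Longrightarrow> f x = f y"
  unfolding reeb_rel_def by blast

lemma qcls_reeb_rel_self: "x \<in> topspace X \<Longrightarrow> x \<in> qcls X (reeb_rel X f) x"
  by (simp add: mem_qcls reeb_rel_refl)

lemma qcls_reeb_rel_eq_iff:
  assumes "x \<in> topspace X"
  shows "qcls X (reeb_rel X f) x = qcls X (reeb_rel X f) y \<longleftrightarrow> reeb_rel X f x y"
proof
  assume "qcls X (reeb_rel X f) x = qcls X (reeb_rel X f) y"
  then have "x \<in> qcls X (reeb_rel X f) y" using qcls_reeb_rel_self[OF assms, of f] by simp
  then show "reeb_rel X f x y" by (simp add: mem_qcls reeb_rel_sym)
next
  assume xy: "reeb_rel X f x y"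
  have "reeb_rel X f x z \<longleftrightarrow> reeb_rel X f y z" for z
    using reeb_rel_trans[OF xy] reeb_rel_trans[OF reeb_rel_sym[OF xy]] by blast
  then show "qcls X (reeb_rel X f) x = qcls X (reeb_rel X f) y"
    unfolding qcls_def by simp
qed

lemma topspace_reeb_top: "topspace (reeb_top X f) = qcls X (reeb_rel X f) ` topspace X"
  by (simp add: reeb_top_def topspace_quot_top)

lemma reeb_top_rep:
  assumes "C \<in> topspace (reeb_top X f)"
  shows "(SOME p. p \<in> C) \<in> topspace X" "C = qcls X (reeb_rel X f) (SOME p. p \<in> C)"
proof -
  obtain x where x: "x \<in> topspace X" "C = qcls X (reeb_rel X f) x"
    using assms unfolding topspace_reeb_top by blast
  then have "x \<in> C" by (simp add: qcls_reeb_rel_self)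
  then have "(SOME p. p \<in> C) \<in> C" by (rule someI)
  then have rep: "(SOME p. p \<in> C) \<in> topspace X" "reeb_rel X f x (SOME p. p \<in> C)"
    using x(2) by (simp_all add: mem_qcls)
  then show "(SOME p. p \<in> C) \<in> topspace X" by simp
  show "C = qcls X (reeb_rel X f) (SOME p. p \<in> C)"
    using rep(2) x qcls_reeb_rel_eq_iff[OF x(1)] by simp
qed

lemma reeb_fn_qcls:
  assumes "x \<in> topspace X"
  shows "reeb_fn X f (qcls X (reeb_rel X f) x) = f x"
proof -
  have "(SOME p. p \<in> qcls X (reeb_rel X f) x) \<in> qcls X (reeb_rel X f) x"
    using qcls_reeb_rel_self[OF assms] by (rule someI)
  then have "f x = f (SOME p. p \<in> qcls X (reeb_rel X f) x)"
    unfolding mem_qcls using reeb_rel_imp_eq[of X f x] by blast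
  then show ?thesis unfolding reeb_fn_def by simp
qed

lemma continuous_map_reeb_fn:
  assumes "continuous_map X euclideanreal f"
  shows "continuous_map (reeb_top X f) euclideanreal (reeb_fn X f)"
proof -
  have "continuous_map X euclideanreal (reeb_fn X f \<circ> qcls X (reeb_rel X f))"
    by (rule continuous_map_eq[OF assms]) (simp add: reeb_fn_qcls)
  then show ?thesis
    unfolding reeb_top_def by (rule continuous_compose_quotient_map[OF quotient_map_qcls])
qed

lemma reeb_rel_continuous_image:
  assumes "reeb_rel X f x y"
    and "continuous_map (subtopology X {z \<in> topspace X. f z = f x}) Y h"
    and "\<And>z. z \<in> topspace X \<Longrightarrow> f z = f x \<Longrightarrow> g (h z) = g (h x)"
  shows "reeb_rel Y g (h x) (h y)"
proof -
  let ?L = "{z \<in> topspace X. f z = f x}"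
  have "h ` topspace (subtopology X ?L) \<subseteq> topspace Y"
    using assms(2) continuous_map_image_subset_topspace by blast
  then have "continuous_map (subtopology X ?L) (subtopology Y {w \<in> topspace Y. g w = g (h x)}) h"
    using assms(2,3) by (auto simp: continuous_map_in_subtopology)
  moreover have "path_component_of (subtopology X ?L) x y"
    using assms(1) unfolding reeb_rel_def by blast
  ultimately have "path_component_of (subtopology Y {w \<in> topspace Y. g w = g (h x)}) (h x) (h y)"
    by (rule path_component_of_continuous_image)
  moreover have "g (h x) = g (h y)"
    using assms(3)[of y] reeb_rel_imp_eq[OF assms(1)] reeb_rel_imp_topspace[OF assms(1)] by simp
  ultimately show ?thesis unfolding reeb_rel_def by simp
qed

section \<open>Smoothings\<close>

lemma topspace_smooth_space: "topspace (smooth_space T e) = topspace T \<times> {-e..e}"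
  by (simp add: smooth_space_def)

lemma smooth_f_simp [simp]: "smooth_f F (a, b) = F a + b"
  by (simp add: smooth_f_def)

lemma continuous_map_smooth_f:
  assumes "continuous_map T euclideanreal F"
  shows "continuous_map (smooth_space T e) euclideanreal (smooth_f F)"
proof -
  have "continuous_map (smooth_space T e) euclideanreal (\<lambda>x. F (fst x) + snd x)"
    unfolding smooth_space_def
    by (intro continuous_map_add continuous_map_compose[OF continuous_map_fst assms, unfolded o_def]
          continuous_map_into_fulltopology[OF continuous_map_snd])
  then show ?thesis by (simp add: smooth_f_def split_beta')
qed

lemma continuous_map_smooth_fn:
  assumes "continuous_map T euclideanreal F"
  shows "continuous_map (smooth_top T F e) euclideanreal (smooth_fn T F e)"
  unfolding smooth_top_def smooth_fn_def
  by (rule continuous_map_reeb_fn[OF continuous_map_smooth_f[OF assms]])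

lemma smooth_pt_in_topspace:
  assumes "w \<in> topspace T" "\<bar>s\<bar> \<le> e"
  shows "smooth_pt T F e w s \<in> topspace (smooth_top T F e)"
  using assms unfolding smooth_pt_def smooth_top_def topspace_reeb_top topspace_smooth_space
  by (intro imageI) (auto simp: abs_le_iff)

lemma smooth_fn_smooth_pt:
  assumes "w \<in> topspace T" "\<bar>s\<bar> \<le> e"
  shows "smooth_fn T F e (smooth_pt T F e w s) = F w + s"
  unfolding smooth_fn_def smooth_pt_def
  by (subst reeb_fn_qcls) (use assms in \<open>auto simp: topspace_smooth_space\<close>)

lemma smooth_pt_eq_iff:
  assumes "w \<in> topspace T" "\<bar>s\<bar> \<le> e"
  shows "smooth_pt T F e w s = smooth_pt T F e w' s' \<longleftrightarrow>
         reeb_rel (smooth_space T e) (smooth_f F) (w, s) (w', s')"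
  unfolding smooth_pt_def
  by (rule qcls_reeb_rel_eq_iff) (use assms in \<open>auto simp: topspace_smooth_space\<close>)

lemma smooth_top_rep:
  assumes "C \<in> topspace (smooth_top T F e)"
  shows "fst (SOME p. p \<in> C) \<in> topspace T" "\<bar>snd (SOME p. p \<in> C)\<bar> \<le> e"
    "C = smooth_pt T F e (fst (SOME p. p \<in> C)) (snd (SOME p. p \<in> C))"
    "smooth_fn T F e C = F (fst (SOME p. p \<in> C)) + snd (SOME p. p \<in> C)"
proof -
  note rep = reeb_top_rep[OF assms[unfolded smooth_top_def]]
  show "fst (SOME p. p \<in> C) \<in> topspace T" "\<bar>snd (SOME p. p \<in> C)\<bar> \<le> e"
    using rep(1) by (auto simp: topspace_smooth_space)
  show "C = smooth_pt T F e (fst (SOME p. p \<in> C)) (snd (SOME p. p \<in> C))"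
    using rep(2) by (simp add: smooth_pt_def)
  show "smooth_fn T F e C = F (fst (SOME p. p \<in> C)) + snd (SOME p. p \<in> C)"
    by (simp add: smooth_fn_def reeb_fn_def smooth_f_def split_beta)
qed

lemma reeb_rel_smooth_rep:
  assumes "w \<in> topspace T" "\<bar>s\<bar> \<le> e"
  shows "reeb_rel (smooth_space T e) (smooth_f F) (w, s)
           (fst (SOME p. p \<in> smooth_pt T F e w s), snd (SOME p. p \<in> smooth_pt T F e w s))"
  using smooth_top_rep(3)[OF smooth_pt_in_topspace[OF assms, of F]] smooth_pt_eq_iff[OF assms, of F]
  by metis

lemma continuous_map_smooth_shift:
  assumes "e1 + \<bar>t\<bar> \<le> e2"
  shows "continuous_map (smooth_space T e1) (smooth_space T e2) (\<lambda>x. (fst x, snd x + t))"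
  unfolding smooth_space_def
proof (rule continuous_map_pairedI)
  show "continuous_map (prod_topology T (top_of_set {-e1..e1})) T fst"
    by (simp add: continuous_map_fst)
  have "continuous_map (prod_topology T (top_of_set {-e1..e1})) euclideanreal (\<lambda>x. snd x + t)"
    by (intro continuous_intros continuous_map_into_fulltopology[OF continuous_map_snd])
  then show "continuous_map (prod_topology T (top_of_set {-e1..e1})) (top_of_set {-e2..e2})
               (\<lambda>x. snd x + t)"
    using assms by (auto simp: continuous_map_in_subtopology)
qed

lemma reeb_rel_smooth_shift:
  assumes "reeb_rel (smooth_space T e1) (smooth_f F) (w, s) (w', s')"
    and "e1 + \<bar>t\<bar> \<le> e2"
  shows "reeb_rel (smooth_space T e2) (smooth_f F) (w, s + t) (w', s' + t)"
  using reeb_rel_continuous_image[OF assms(1)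
      continuous_map_from_subtopology[OF continuous_map_smooth_shift[OF assms(2)]], of "smooth_f F"]
  by (simp add: smooth_f_def split_beta)

lemma reeb_rel_smooth_mono:
  assumes "reeb_rel (smooth_space T e1) (smooth_f F) p q" "e1 \<le> e2"
  shows "reeb_rel (smooth_space T e2) (smooth_f F) p q"
  using reeb_rel_smooth_shift[of T e1 F "fst p" "snd p" "fst q" "snd q" 0 e2] assms by simp

lemma path_component_imp_reeb_rel_smooth:
  assumes "path_component_of (subtopology T A) a a'"
    and "continuous_map T euclideanreal F"
    and "\<And>z. z \<in> A \<Longrightarrow> z \<in> topspace T \<Longrightarrow> \<bar>c - F z\<bar> \<le> e"
  shows "reeb_rel (smooth_space T e) (smooth_f F) (a, c - F a) (a', c - F a')"
proof -
  let ?X = "subtopology T A"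
  have level: "{z \<in> topspace ?X. (0::real) = 0} = topspace ?X" by blast
  have rel: "reeb_rel ?X (\<lambda>_. 0::real) a a'"
    unfolding reeb_rel_def level subtopology_topspace using assms(1) by simp
  have "continuous_map ?X euclideanreal (\<lambda>x. c - F x)"
    by (intro continuous_intros continuous_map_from_subtopology[OF assms(2)])
  then have "continuous_map ?X (top_of_set {-e..e}) (\<lambda>x. c - F x)"
    using assms(3) by (fastforce simp: continuous_map_in_subtopology abs_le_iff)
  then have "continuous_map ?X (smooth_space T e) (\<lambda>z. (z, c - F z))"
    unfolding smooth_space_def
    by (intro continuous_map_pairedI) (simp_all add: continuous_map_from_subtopology)
  then show ?thesis
    using reeb_rel_continuous_image[OF rel, of "smooth_space T e" "\<lambda>z. (z, c - F z)" "smooth_f F"]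
    by (simp add: continuous_map_from_subtopology)
qed

lemma reeb_rel_smooth_imp_path_component:
  assumes "reeb_rel (smooth_space T e) (smooth_f F) (a, b) (a', b')"
    and "\<And>z. z \<in> topspace T \<Longrightarrow> F a + b - e \<le> F z \<Longrightarrow> F z \<le> F a + b + e \<Longrightarrow> z \<in> A"
  shows "path_component_of (subtopology T A) a a'"
proof -
  let ?L = "{z \<in> topspace (smooth_space T e). smooth_f F z = smooth_f F (a, b)}"
  have "continuous_map (subtopology (smooth_space T e) ?L) T fst"
    unfolding smooth_space_def by (intro continuous_map_from_subtopology continuous_map_fst)
  then have "continuous_map (subtopology (smooth_space T e) ?L) (subtopology T A) fst"
    using assms(2) by (auto simp: continuous_map_in_subtopology topspace_smooth_space)
  moreover have "path_component_of (subtopology (smooth_space T e) ?L) (a, b) (a', b')"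
    using assms(1) unfolding reeb_rel_def by blast
  ultimately show ?thesis
    using path_component_of_continuous_image by fastforce
qed

lemma path_component_smooth_rep:
  assumes "w \<in> topspace T" "\<bar>s\<bar> \<le> e" "\<bar>F w + s - c\<bar> + e < 2 * e'"
  shows "path_component_of (subtopology T {z \<in> topspace T. c - 2 * e' < F z \<and> F z < c + 2 * e'})
           w (fst (SOME p. p \<in> smooth_pt T F e w s))"
  by (rule reeb_rel_smooth_imp_path_component[OF reeb_rel_smooth_rep[OF assms(1,2)]])
    (use assms(3) in \<open>auto simp: abs_le_iff abs_less_iff\<close>)

section \<open>Monotone paths and truncation\<close>

lemma pathin_mem: "pathin X g \<Longrightarrow> u \<in> {0..1} \<Longrightarrow> g u \<in> topspace X"
  unfolding pathin_def continuous_map_def by (auto simp: Pi_iff)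

lemma pathin_join:
  assumes "pathin X g1" "pathin X g2" "g2 0 = g1 1"
  shows "pathin X (\<lambda>x. if x \<le> 1/2 then g1 (2 * x) else g2 (2 * x - 1))"
  unfolding pathin_def
proof -
  let ?I = "top_of_set {0..1::real}"
  have g1: "continuous_map ?I X g1" and g2: "continuous_map ?I X g2"
    using assms unfolding pathin_def by auto
  let ?g = "\<lambda>x. if x \<le> 1/2 then (g1 \<circ> (\<lambda>t. 2 * t)) x else (g2 \<circ> (\<lambda>t. 2 * t - 1)) x"
  have "continuous_map ?I X ?g"
  proof (intro continuous_map_cases_le continuous_map_compose, force, force)
    show "continuous_map (subtopology ?I {x \<in> topspace ?I. x \<le> 1/2}) ?I ((*) 2)"
      by (auto simp: continuous_map_in_subtopology continuous_map_from_subtopology)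
    have "continuous_map (subtopology ?I {x. 0 \<le> x \<and> x \<le> 1 \<and> 1 \<le> x * 2}) euclideanreal
            (\<lambda>t. 2 * t - 1)"
      by (intro continuous_intros) (force intro: continuous_map_from_subtopology)
    then show "continuous_map (subtopology ?I {x \<in> topspace ?I. 1/2 \<le> x}) ?I (\<lambda>t. 2 * t - 1)"
      by (force simp: continuous_map_in_subtopology)
    show "(g1 \<circ> (*) 2) x = (g2 \<circ> (\<lambda>t. 2 * t - 1)) x" if "x \<in> topspace ?I" "x = 1/2" for x
    proof -
      have "2 * x = 1" "2 * x - 1 = 0" using that by auto
      then show ?thesis using assms(3) by simp
    qed
  qed (auto simp: g1 g2)
  moreover have "?g = (\<lambda>x. if x \<le> 1/2 then g1 (2 * x) else g2 (2 * x - 1))"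
    by (rule ext) simp
  ultimately show "continuous_map ?I X (\<lambda>x. if x \<le> 1/2 then g1 (2 * x) else g2 (2 * x - 1))"
    by metis
qed

lemma up_path_join:
  assumes "up_path X F g1" "up_path X F g2" "g2 0 = g1 1"
  shows "up_path X F (\<lambda>x. if x \<le> 1/2 then g1 (2 * x) else g2 (2 * x - 1))"
  unfolding up_path_def
proof (intro conjI allI impI)
  show "pathin X (\<lambda>x. if x \<le> 1/2 then g1 (2 * x) else g2 (2 * x - 1))"
    using assms pathin_join unfolding up_path_def by blast
  fix s t :: real
  assume st: "0 \<le> s \<and> s \<le> t \<and> t \<le> 1"
  have m1: "F (g1 a) \<le> F (g1 b)" and m2: "F (g2 a) \<le> F (g2 b)" if "0 \<le> a" "a \<le> b" "b \<le> 1" for a b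
    using assms(1,2) that unfolding up_path_def by blast+
  show "F (if s \<le> 1/2 then g1 (2 * s) else g2 (2 * s - 1))
          \<le> F (if t \<le> 1/2 then g1 (2 * t) else g2 (2 * t - 1))"
  proof (cases "t \<le> 1/2")
    case True
    then show ?thesis using st m1[of "2 * s" "2 * t"] by auto
  next
    case t: False
    show ?thesis
    proof (cases "s \<le> 1/2")
      case True
      then have "F (g1 (2 * s)) \<le> F (g1 1)" using st m1[of "2 * s" 1] by auto
      also have "\<dots> = F (g2 0)" using assms(3) by simp
      also have "\<dots> \<le> F (g2 (2 * t - 1))" using st t m2[of 0 "2 * t - 1"] by auto
      finally show ?thesis using True t by simp
    next
      case False
      then show ?thesis using st t m2[of "2 * s - 1" "2 * t - 1"] by auto
    qed
  qed
qed

lemma up_path_uminus_iff: "up_path X (\<lambda>x. - F x) g \<longleftrightarrow> down_path X F g"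
  unfolding up_path_def down_path_def by simp

lemma down_path_join:
  assumes "down_path X F g1" "down_path X F g2" "g2 0 = g1 1"
  shows "down_path X F (\<lambda>x. if x \<le> 1/2 then g1 (2 * x) else g2 (2 * x - 1))"
  using up_path_join[of X "\<lambda>x. - F x" g1 g2] assms by (simp add: up_path_uminus_iff)

lemma up_path_rescale:
  assumes "up_path X F g" "0 \<le> x" "x \<le> 1"
  shows "up_path X F (\<lambda>v. g (x * v))"
  unfolding up_path_def
proof (intro conjI allI impI)
  have "continuous_map (top_of_set {0..1}) (top_of_set {0..1::real}) (\<lambda>v. x * v)"
    using assms(2,3) by (auto intro!: continuous_intros simp: mult_le_one)
  from continuous_map_compose[OF this] show "pathin X (\<lambda>v. g (x * v))"
    using assms(1) unfolding up_path_def pathin_def o_def by blast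
  fix s t :: real
  assume "0 \<le> s \<and> s \<le> t \<and> t \<le> 1"
  then have "0 \<le> x * s" "x * s \<le> x * t" "x * t \<le> 1"
    using assms(2,3) by (auto intro: mult_left_mono mult_le_one)
  then show "F (g (x * s)) \<le> F (g (x * t))" using assms(1) unfolding up_path_def by blast
qed

lemma down_path_rescale:
  assumes "down_path X F g" "0 \<le> x" "x \<le> 1"
  shows "down_path X F (\<lambda>v. g (x * v))"
  using up_path_rescale[of X "\<lambda>x. - F x" g] assms by (simp add: up_path_uminus_iff)

lemma continuous_on_pathin_comp:
  assumes "pathin X g" "continuous_map X euclideanreal F"
  shows "continuous_on {0..1} (F \<circ> g)"
  using continuous_map_compose[OF assms(1)[unfolded pathin_def] assms(2)] by simp

text \<open>An up-path of height \<open>t\<^sub>2\<close> reaches height \<open>t\<^sub>1 \<le> t\<^sub>2\<close> at some intermediate time by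
  the intermediate value theorem; rescaling it to that time gives an up-path of height \<open>t\<^sub>1\<close>.\<close>

lemma trunc_set_antimono:
  assumes F: "continuous_map X euclideanreal F" and t: "0 \<le> t1" "t1 \<le> t2"
  shows "trunc_set X F t2 \<subseteq> trunc_set X F t1"
proof
  fix p
  assume p: "p \<in> trunc_set X F t2"
  obtain gu where gu: "up_path X F gu" "gu 0 = p" "F (gu 1) - F p = t2"
    using p unfolding trunc_set_def by blast
  obtain gd where gd: "down_path X F gd" "gd 0 = p" "F p - F (gd 1) = t2"
    using p unfolding trunc_set_def by blast
  have "\<exists>x. 0 \<le> x \<and> x \<le> 1 \<and> (F \<circ> gu) x = F p + t1"
    by (rule IVT') (use gu t continuous_on_pathin_comp[OF _ F] in \<open>auto simp: up_path_def\<close>)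
  then obtain xu where xu: "0 \<le> xu" "xu \<le> 1" "F (gu xu) = F p + t1" by auto
  have "\<exists>x. 0 \<le> x \<and> x \<le> 1 \<and> (F \<circ> gd) x = F p - t1"
    by (rule IVT2') (use gd t continuous_on_pathin_comp[OF _ F] in \<open>auto simp: down_path_def\<close>)
  then obtain xd where xd: "0 \<le> xd" "xd \<le> 1" "F (gd xd) = F p - t1" by auto
  show "p \<in> trunc_set X F t1"
    using p up_path_rescale[OF gu(1) xu(1,2)] down_path_rescale[OF gd(1) xd(1,2)]
      gu(2) gd(2) xu(3) xd(3)
    unfolding trunc_set_def by auto
qed

section \<open>The natural maps between smoothings\<close>

text \<open>\<open>\<eta>\<close> into \<open>S\<^sub>e(T)\<close>, defined on classes of every smoothing \<open>S\<^sub>e\<^sub>0(T)\<close> with \<open>e\<^sub>0 \<le> e\<close>.\<close>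

definition smooth_eta :: "'p topology \<Rightarrow> ('p \<Rightarrow> real) \<Rightarrow> real \<Rightarrow> ('p \<times> real) set \<Rightarrow> ('p \<times> real) set"
  where "smooth_eta T F e C = smooth_pt T F e (fst (SOME p. p \<in> C)) (snd (SOME p. p \<in> C))"

lemma smooth_eta_smooth_pt:
  assumes "w \<in> topspace T" "\<bar>s\<bar> \<le> e1" "e1 \<le> e2"
  shows "smooth_eta T F e2 (smooth_pt T F e1 w s) = smooth_pt T F e2 w s"
proof -
  have "reeb_rel (smooth_space T e2) (smooth_f F) (w, s)
          (fst (SOME p. p \<in> smooth_pt T F e1 w s), snd (SOME p. p \<in> smooth_pt T F e1 w s))"
    by (rule reeb_rel_smooth_mono[OF reeb_rel_smooth_rep[OF assms(1,2)] assms(3)])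
  then have "smooth_pt T F e2 w s = smooth_eta T F e2 (smooth_pt T F e1 w s)"
    unfolding smooth_eta_def using smooth_pt_eq_iff[of w T s e2 F] assms by auto
  then show ?thesis by simp
qed

lemma smooth_eta_in_topspace:
  assumes "C \<in> topspace (smooth_top T F e1)" "e1 \<le> e2"
  shows "smooth_eta T F e2 C \<in> topspace (smooth_top T F e2)"
  using smooth_top_rep[OF assms(1)] assms(2) unfolding smooth_eta_def
  by (intro smooth_pt_in_topspace) auto

lemma smooth_fn_smooth_eta:
  assumes "C \<in> topspace (smooth_top T F e1)" "e1 \<le> e2"
  shows "smooth_fn T F e2 (smooth_eta T F e2 C) = smooth_fn T F e1 C"
  using smooth_top_rep[OF assms(1)] assms(2) unfolding smooth_eta_def
  by (subst smooth_fn_smooth_pt) auto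

lemma continuous_map_smooth_eta:
  assumes "e1 \<le> e2"
  shows "continuous_map (smooth_top T F e1) (smooth_top T F e2) (smooth_eta T F e2)"
proof -
  let ?q1 = "qcls (smooth_space T e1) (reeb_rel (smooth_space T e1) (smooth_f F))"
  let ?q2 = "qcls (smooth_space T e2) (reeb_rel (smooth_space T e2) (smooth_f F))"
  have "continuous_map (smooth_space T e1) (smooth_space T e2) (\<lambda>x. x)"
    using continuous_map_smooth_shift[of e1 0 e2 T] assms by simp
  then have "continuous_map (smooth_space T e1) (smooth_top T F e2) ?q2"
    using continuous_map_compose[OF _ continuous_map_qcls]
    unfolding smooth_top_def reeb_top_def o_def by blast
  then have "continuous_map (smooth_space T e1) (smooth_top T F e2) (smooth_eta T F e2 \<circ> ?q1)"
  proof (rule continuous_map_eq)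
    fix x
    assume "x \<in> topspace (smooth_space T e1)"
    then have "fst x \<in> topspace T" "\<bar>snd x\<bar> \<le> e1" by (auto simp: topspace_smooth_space)
    from smooth_eta_smooth_pt[OF this assms, of F]
    show "?q2 x = (smooth_eta T F e2 \<circ> ?q1) x" by (simp add: smooth_pt_def)
  qed
  then show ?thesis
    unfolding smooth_top_def reeb_top_def
    by (rule continuous_compose_quotient_map[OF quotient_map_qcls])
qed

lemma pathin_smooth_vertical:
  assumes "w \<in> topspace T" "continuous_on {0..1} h" "\<And>v. v \<in> {0..1} \<Longrightarrow> \<bar>h v\<bar> \<le> e"
  shows "pathin (smooth_top T F e) (\<lambda>v. smooth_pt T F e w (h v))"
proof -
  have "continuous_map (top_of_set {0..1}) (top_of_set {-e..e}) h"
    using assms(2,3) by (fastforce simp: abs_le_iff)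
  then have "continuous_map (top_of_set {0..1}) (smooth_space T e) (\<lambda>v. (w, h v))"
    unfolding smooth_space_def using assms(1) by (intro continuous_map_pairedI) auto
  from continuous_map_compose[OF this continuous_map_qcls]
  show ?thesis unfolding pathin_def smooth_top_def reeb_top_def smooth_pt_def o_def .
qed

lemma smooth_vertical_path:
  assumes "C \<in> topspace (smooth_top T F e1)" "e1 + \<bar>k\<bar> \<le> e2"
  defines "g \<equiv> \<lambda>v. smooth_pt T F e2 (fst (SOME p. p \<in> C)) (snd (SOME p. p \<in> C) + v * k)"
  shows "pathin (smooth_top T F e2) g" "g 0 = smooth_eta T F e2 C"
    "\<And>v. v \<in> {0..1} \<Longrightarrow> smooth_fn T F e2 (g v) = smooth_fn T F e1 C + v * k"
proof -
  note rep = smooth_top_rep[OF assms(1)]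
  have bound: "\<bar>snd (SOME p. p \<in> C) + v * k\<bar> \<le> e2" if "v \<in> {0..1}" for v
  proof -
    have "\<bar>v * k\<bar> \<le> \<bar>k\<bar>" using that by (auto simp: abs_mult intro: mult_left_le_one_le)
    then show ?thesis using rep(2) assms(2) by linarith
  qed
  show "pathin (smooth_top T F e2) g"
    unfolding g_def by (rule pathin_smooth_vertical[OF rep(1)]) (auto intro!: continuous_intros bound)
  show "g 0 = smooth_eta T F e2 C" by (simp add: g_def smooth_eta_def)
  show "smooth_fn T F e2 (g v) = smooth_fn T F e1 C + v * k" if "v \<in> {0..1}" for v
    unfolding g_def using smooth_fn_smooth_pt[OF rep(1) bound[OF that]] rep(4) by simp
qed

lemma up_path_smooth_eta_extend:
  assumes "up_path (smooth_top T F e1) (smooth_fn T F e1) g" "e1 \<le> e2"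
  obtains g' where "up_path (smooth_top T F e2) (smooth_fn T F e2) g'"
    "g' 0 = smooth_eta T F e2 (g 0)"
    "smooth_fn T F e2 (g' 1) = smooth_fn T F e1 (g 1) + (e2 - e1)"
proof -
  have g: "pathin (smooth_top T F e1) g" using assms(1) unfolding up_path_def by blast
  note g_mem = pathin_mem[OF g]
  have eta_g: "up_path (smooth_top T F e2) (smooth_fn T F e2) (smooth_eta T F e2 \<circ> g)"
    using assms(1) pathin_compose[OF g continuous_map_smooth_eta[OF assms(2)]]
      smooth_fn_smooth_eta[OF g_mem assms(2)]
    unfolding up_path_def by auto
  define h where "h v = smooth_pt T F e2 (fst (SOME p. p \<in> g 1)) (snd (SOME p. p \<in> g 1) + v * (e2 - e1))"
    for v
  note h = smooth_vertical_path[OF g_mem[of 1] _, of "e2 - e1" e2, folded h_def]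
  have "up_path (smooth_top T F e2) (smooth_fn T F e2) h"
    using h assms(2) unfolding up_path_def by (auto intro: mult_right_mono)
  then show thesis
    using that[OF up_path_join[OF eta_g]] h assms(2) by simp
qed

lemma down_path_smooth_eta_extend:
  assumes "down_path (smooth_top T F e1) (smooth_fn T F e1) g" "e1 \<le> e2"
  obtains g' where "down_path (smooth_top T F e2) (smooth_fn T F e2) g'"
    "g' 0 = smooth_eta T F e2 (g 0)"
    "smooth_fn T F e2 (g' 1) = smooth_fn T F e1 (g 1) - (e2 - e1)"
proof -
  have g: "pathin (smooth_top T F e1) g" using assms(1) unfolding down_path_def by blast
  note g_mem = pathin_mem[OF g]
  have eta_g: "down_path (smooth_top T F e2) (smooth_fn T F e2) (smooth_eta T F e2 \<circ> g)"
    using assms(1) pathin_compose[OF g continuous_map_smooth_eta[OF assms(2)]]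
      smooth_fn_smooth_eta[OF g_mem assms(2)]
    unfolding down_path_def by auto
  define h where "h v = smooth_pt T F e2 (fst (SOME p. p \<in> g 1)) (snd (SOME p. p \<in> g 1) + v * - (e2 - e1))"
    for v
  note h = smooth_vertical_path[OF g_mem[of 1] _, of "- (e2 - e1)" e2, folded h_def]
  have "down_path (smooth_top T F e2) (smooth_fn T F e2) h"
    using h assms(2) unfolding down_path_def by (auto intro: mult_right_mono_neg)
  then show thesis
    using that[OF down_path_join[OF eta_g]] h assms(2) by simp
qed

lemma smooth_eta_trunc_set:
  assumes "C \<in> trunc_set (smooth_top T F e1) (smooth_fn T F e1) \<tau>" "e1 \<le> e2"
  shows "smooth_eta T F e2 C \<in> trunc_set (smooth_top T F e2) (smooth_fn T F e2) (\<tau> + (e2 - e1))"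
proof -
  have C: "C \<in> topspace (smooth_top T F e1)" using assms(1) unfolding trunc_set_def by blast
  obtain gu where gu: "up_path (smooth_top T F e1) (smooth_fn T F e1) gu" "gu 0 = C"
      "smooth_fn T F e1 (gu 1) - smooth_fn T F e1 C = \<tau>"
    using assms(1) unfolding trunc_set_def by blast
  obtain gd where gd: "down_path (smooth_top T F e1) (smooth_fn T F e1) gd" "gd 0 = C"
      "smooth_fn T F e1 C - smooth_fn T F e1 (gd 1) = \<tau>"
    using assms(1) unfolding trunc_set_def by blast
  obtain gu' where "up_path (smooth_top T F e2) (smooth_fn T F e2) gu'"
      "gu' 0 = smooth_eta T F e2 C"
      "smooth_fn T F e2 (gu' 1) = smooth_fn T F e1 (gu 1) + (e2 - e1)"
    using up_path_smooth_eta_extend[OF gu(1) assms(2)] gu(2) by metis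
  moreover obtain gd' where "down_path (smooth_top T F e2) (smooth_fn T F e2) gd'"
      "gd' 0 = smooth_eta T F e2 C"
      "smooth_fn T F e2 (gd' 1) = smooth_fn T F e1 (gd 1) - (e2 - e1)"
    using down_path_smooth_eta_extend[OF gd(1) assms(2)] gd(2) by metis
  ultimately show ?thesis
    using smooth_eta_in_topspace[OF C assms(2)] smooth_fn_smooth_eta[OF C assms(2)] gu(3) gd(3)
    unfolding trunc_set_def by auto
qed

lemma openin_smooth_top_band_component:
  fixes c e e' :: real
  assumes lpc: "locally_path_connected_space T" and F: "continuous_map T euclideanreal F"
  defines "A \<equiv> {z \<in> topspace T. c - 2 * e' < F z \<and> F z < c + 2 * e'}"
  shows "openin (smooth_top T F e)
           {D \<in> topspace (smooth_top T F e). fst (SOME p. p \<in> D) \<in> path_component_of_set (subtopology T A) a \<and>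
                                              \<bar>smooth_fn T F e D - c\<bar> < 2 * e' - e}"
    (is "openin _ ?O")
proof -
  let ?X = "smooth_space T e" and ?q = "qcls (smooth_space T e) (reeb_rel (smooth_space T e) (smooth_f F))"
  let ?I = "{c - (2 * e' - e) <..< c + (2 * e' - e)}"
  have "openin T A"
    using openin_continuous_map_preimage[OF F, of "{c - 2 * e' <..< c + 2 * e'}"]
    unfolding A_def by simp
  then have W_open: "openin T (path_component_of_set (subtopology T A) a)"
    using openin_trans_full[OF openin_path_component_of_locally_path_connected_space
          [OF locally_path_connected_space_open_subset[OF lpc]]] by blast
  let ?W = "path_component_of_set (subtopology T A) a"
  have pointwise: "?q (w, s) \<in> ?O \<longleftrightarrow> w \<in> ?W \<and> \<bar>F w + s - c\<bar> < 2 * e' - e"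
    if ws: "w \<in> topspace T" "\<bar>s\<bar> \<le> e" for w s
  proof -
    have q: "?q (w, s) = smooth_pt T F e w s" by (simp add: smooth_pt_def)
    show ?thesis
    proof (cases "\<bar>F w + s - c\<bar> < 2 * e' - e")
      case True
      then have "path_component_of (subtopology T A) w (fst (SOME p. p \<in> smooth_pt T F e w s))"
        unfolding A_def by (intro path_component_smooth_rep[OF ws]) simp
      then have "fst (SOME p. p \<in> smooth_pt T F e w s) \<in> ?W \<longleftrightarrow> w \<in> ?W"
        by (metis mem_Collect_eq path_component_of_equiv)
      then show ?thesis
        using True smooth_pt_in_topspace[OF ws] smooth_fn_smooth_pt[OF ws] unfolding q by simp
    next
      case False
      then show ?thesis using smooth_fn_smooth_pt[OF ws] unfolding q by simp
    qed
  qed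
  have preimage: "{x \<in> topspace ?X. ?q x \<in> ?O}
      = {x \<in> topspace ?X. fst x \<in> ?W} \<inter> {x \<in> topspace ?X. smooth_f F x \<in> ?I}"
  proof (intro set_eqI)
    fix x :: "'a \<times> real"
    show "x \<in> {x \<in> topspace ?X. ?q x \<in> ?O} \<longleftrightarrow>
          x \<in> {x \<in> topspace ?X. fst x \<in> ?W} \<inter> {x \<in> topspace ?X. smooth_f F x \<in> ?I}"
    proof (cases "x \<in> topspace ?X")
      case True
      then obtain w s where x: "x = (w, s)" "w \<in> topspace T" "\<bar>s\<bar> \<le> e"
        by (cases x) (auto simp: topspace_smooth_space abs_le_iff)
      have "smooth_f F x \<in> ?I \<longleftrightarrow> \<bar>F w + s - c\<bar> < 2 * e' - e"
        by (auto simp: x(1) abs_less_iff)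
      then show ?thesis using pointwise[OF x(2,3)] True x(1) by simp
    qed simp
  qed
  have "openin ?X {x \<in> topspace ?X. fst x \<in> ?W}"
    by (rule openin_continuous_map_preimage[OF _ W_open])
      (simp add: smooth_space_def continuous_map_fst)
  moreover have "openin ?X {x \<in> topspace ?X. smooth_f F x \<in> ?I}"
    by (rule openin_continuous_map_preimage[OF continuous_map_smooth_f[OF F]]) simp
  ultimately have "openin ?X {x \<in> topspace ?X. ?q x \<in> ?O}"
    unfolding preimage by (rule openin_Int)
  moreover have "?O \<subseteq> ?q ` topspace ?X"
    unfolding smooth_top_def topspace_reeb_top by blast
  ultimately show ?thesis
    unfolding smooth_top_def reeb_top_def openin_quot_top by blast
qed

text \<open>The relation "representatives lie in one path component of the band" is open along
  the path by the previous lemma, hence constant on the connected interval.\<close>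

lemma path_component_smooth_path_reps:
  assumes lpc: "locally_path_connected_space T" and F: "continuous_map T euclideanreal F"
    and "e < e'" and g: "pathin (smooth_top T F e) g"
    and bound: "\<And>u. u \<in> {0..1} \<Longrightarrow> \<bar>c - smooth_fn T F e (g u)\<bar> \<le> e'"
  shows "path_component_of (subtopology T {z \<in> topspace T. c - 2 * e' < F z \<and> F z < c + 2 * e'})
           (fst (SOME p. p \<in> g 0)) (fst (SOME p. p \<in> g 1))"
proof -
  define A where "A = {z \<in> topspace T. c - 2 * e' < F z \<and> F z < c + 2 * e'}"
  define rep where "rep u = fst (SOME p. p \<in> g u)" for u
  let ?R = "\<lambda>u v. path_component_of (subtopology T A) (rep u) (rep v)"
  have "?R 0 1"
  proof (rule connected_equivalence_relation[of "{0..1}" 0 1 ?R])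
    show "?R y x" if "?R x y" for x y using that by (rule path_component_of_sym)
    show "?R x z" if "?R x y" "?R y z" for x y z using that by (rule path_component_of_trans)
  next
    fix u0 :: real
    assume u0: "u0 \<in> {0..1}"
    define N where "N = {D \<in> topspace (smooth_top T F e).
        fst (SOME p. p \<in> D) \<in> path_component_of_set (subtopology T A) (rep u0) \<and>
        \<bar>smooth_fn T F e D - c\<bar> < 2 * e' - e}"
    have "openin (smooth_top T F e) N"
      unfolding N_def A_def by (rule openin_smooth_top_band_component[OF lpc F])
    then have N_open: "openin (top_of_set {0..1}) {u \<in> {0..1}. g u \<in> N}"
      using openin_continuous_map_preimage g unfolding pathin_def by fastforce
    note rep0 = smooth_top_rep[OF pathin_mem[OF g u0]]
    have "\<bar>c - F (rep u0)\<bar> < 2 * e'" "\<bar>smooth_fn T F e (g u0) - c\<bar> < 2 * e' - e"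
      using bound[OF u0] rep0(2,4) \<open>e < e'\<close> unfolding rep_def by (simp_all add: abs_le_iff abs_less_iff)
    then have "u0 \<in> {u \<in> {0..1}. g u \<in> N}"
      using u0 rep0(1) pathin_mem[OF g u0]
      unfolding N_def A_def rep_def by (simp add: abs_less_iff path_component_of_refl)
    moreover have "\<forall>u \<in> {u \<in> {0..1}. g u \<in> N}. ?R u0 u"
      unfolding N_def rep_def by simp
    ultimately show "\<exists>U. openin (top_of_set {0..1}) U \<and> u0 \<in> U \<and> (\<forall>u\<in>U. ?R u0 u)"
      using N_open by blast
  qed auto
  then show ?thesis unfolding A_def rep_def .
qed

section \<open>Interleavings\<close>

lemma to_tsmoothD:
  assumes "to_tsmooth T F T' F' m e \<phi>"
  shows "continuous_map T (smooth_top T' F' e) \<phi>"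
    "\<And>x. x \<in> topspace T \<Longrightarrow> \<phi> x \<in> trunc_set (smooth_top T' F' e) (smooth_fn T' F' e) (m * e)"
    "\<And>x. x \<in> topspace T \<Longrightarrow> \<phi> x \<in> topspace (smooth_top T' F' e)"
    "\<And>x. x \<in> topspace T \<Longrightarrow> smooth_fn T' F' e (\<phi> x) = F x"
  using assms continuous_map_image_subset_topspace
  unfolding to_tsmooth_def tsmooth_top_def continuous_map_in_subtopology trunc_set_def
  by blast+

lemma to_tsmooth_antimono:
  assumes "to_tsmooth T F T' F' m2 e \<phi>" "0 \<le> m1" "m1 \<le> m2" "0 \<le> e"
    and "continuous_map T' euclideanreal F'"
  shows "to_tsmooth T F T' F' m1 e \<phi>"
proof -
  have "trunc_set (smooth_top T' F' e) (smooth_fn T' F' e) (m2 * e)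
          \<subseteq> trunc_set (smooth_top T' F' e) (smooth_fn T' F' e) (m1 * e)"
    by (rule trunc_set_antimono[OF continuous_map_smooth_fn[OF assms(5)]])
      (use assms(2-4) in \<open>auto intro: mult_right_mono\<close>)
  then show ?thesis
    using assms(1) unfolding to_tsmooth_def tsmooth_top_def continuous_map_in_subtopology by blast
qed

lemma interleaving_antimono:
  assumes "interleaving m2 e T F T' F' \<phi> \<psi>" "0 \<le> m1" "m1 \<le> m2" "0 \<le> e"
    and "continuous_map T euclideanreal F" "continuous_map T' euclideanreal F'"
  shows "interleaving m1 e T F T' F' \<phi> \<psi>"
  using assms to_tsmooth_antimono unfolding interleaving_def by metis

lemma to_tsmooth_smooth_eta:
  assumes "to_tsmooth T F T' F' m e \<phi>" "e \<le> e'" "m' * e' = m * e + (e' - e)"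
  shows "to_tsmooth T F T' F' m' e' (smooth_eta T' F' e' \<circ> \<phi>)"
proof -
  note \<phi> = to_tsmoothD[OF assms(1)]
  have "continuous_map T (smooth_top T' F' e') (smooth_eta T' F' e' \<circ> \<phi>)"
    using continuous_map_compose[OF \<phi>(1) continuous_map_smooth_eta[OF assms(2)]] .
  moreover have "(smooth_eta T' F' e' \<circ> \<phi>) x
                   \<in> trunc_set (smooth_top T' F' e') (smooth_fn T' F' e') (m' * e')"
    if "x \<in> topspace T" for x
    using smooth_eta_trunc_set[OF \<phi>(2)[OF that] assms(2)] assms(3) by simp
  moreover have "smooth_fn T' F' e' ((smooth_eta T' F' e' \<circ> \<phi>) x) = F x" if "x \<in> topspace T" for x
    using smooth_fn_smooth_eta[OF \<phi>(3)[OF that] assms(2)] \<phi>(4)[OF that] by simp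
  ultimately show ?thesis
    unfolding to_tsmooth_def tsmooth_top_def continuous_map_in_subtopology by auto
qed

text \<open>An identification in \<open>S\<^sub>e\<^sub>'(T')\<close> is carried by \<open>\<psi>\<close> to one in
  \<open>S\<^sub>2\<^sub>e\<^sub>'(T)\<close>: the level path witnessing it becomes a path in \<open>S\<^sub>e(T)\<close> whose
  values stay within \<open>e'\<close> of the common level \<open>F' y0 + t0\<close>.\<close>

lemma reeb_rel_smooth_morphism_reps:
  assumes lpc: "locally_path_connected_space T" and F: "continuous_map T euclideanreal F"
    and "e < e'" and \<psi>: "to_tsmooth T' F' T F m e \<psi>"
    and rel: "reeb_rel (smooth_space T' e') (smooth_f F') (y0, t0) (y1, t1)"
  defines "z0 \<equiv> fst (SOME p. p \<in> \<psi> y0)" and "s0 \<equiv> snd (SOME p. p \<in> \<psi> y0)"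
    and "z1 \<equiv> fst (SOME p. p \<in> \<psi> y1)" and "s1 \<equiv> snd (SOME p. p \<in> \<psi> y1)"
  shows "reeb_rel (smooth_space T (2 * e')) (smooth_f F) (z0, s0 + t0) (z1, s1 + t1)"
proof -
  note \<psi>D = to_tsmoothD[OF \<psi>]
  define c where "c = F' y0 + t0"
  let ?L = "{z \<in> topspace (smooth_space T' e'). smooth_f F' z = smooth_f F' (y0, t0)}"
  obtain g where g: "pathin (subtopology (smooth_space T' e') ?L) g" "g 0 = (y0, t0)" "g 1 = (y1, t1)"
    using rel unfolding reeb_rel_def path_component_of_def by blast
  have g_level: "fst (g u) \<in> topspace T'" "\<bar>snd (g u)\<bar> \<le> e'" "F' (fst (g u)) + snd (g u) = c"
    if "u \<in> {0..1}" for u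
    using pathin_mem[OF g(1) that] by (auto simp: topspace_smooth_space c_def split_beta)
  have "pathin (smooth_space T' e') g"
    using g(1) by (simp add: pathin_subtopology)
  then have "pathin T' (fst \<circ> g)"
    by (rule pathin_compose) (simp add: smooth_space_def continuous_map_fst)
  then have "pathin (smooth_top T F e) (\<psi> \<circ> fst \<circ> g)"
    using pathin_compose \<psi>D(1) by (metis comp_assoc)
  moreover have "\<bar>c - smooth_fn T F e ((\<psi> \<circ> fst \<circ> g) u)\<bar> \<le> e'" if "u \<in> {0..1}" for u
    using g_level[OF that] \<psi>D(4)[OF g_level(1)[OF that]] by auto
  ultimately have "path_component_of (subtopology T {z \<in> topspace T. c - 2 * e' < F z \<and> F z < c + 2 * e'})
                     z0 z1"
    using path_component_smooth_path_reps[OF lpc F \<open>e < e'\<close>] g(2,3)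
    unfolding z0_def z1_def by fastforce
  then have "reeb_rel (smooth_space T (2 * e')) (smooth_f F) (z0, c - F z0) (z1, c - F z1)"
    by (rule path_component_imp_reeb_rel_smooth[OF _ F]) (auto simp: abs_le_iff)
  moreover have "y0 \<in> topspace T'" "y1 \<in> topspace T'"
    using g_level[of 0] g_level[of 1] g(2,3) by auto
  then have "F z0 + s0 = F' y0" "F z1 + s1 = F' y1"
    using smooth_top_rep(4)[OF \<psi>D(3)] \<psi>D(4) unfolding z0_def s0_def z1_def s1_def by auto
  moreover have "F' y1 + t1 = c"
    using g_level[of 1] g(3) by simp
  ultimately have "c - F z0 = s0 + t0" "c - F z1 = s1 + t1"
    by (simp_all add: c_def)
  with \<open>reeb_rel (smooth_space T (2 * e')) (smooth_f F) (z0, c - F z0) (z1, c - F z1)\<close>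
  show ?thesis by simp
qed

text \<open>The identity \<open>S[\<psi>] \<circ> \<phi> = \<eta>\<close> survives post-composition with \<open>\<eta>\<close>: the chain
  \<open>[x, 0] = [z\<^sub>0, s\<^sub>0 + t\<^sub>0] = [z\<^sub>1, s\<^sub>1 + t'] = [z', s' + t']\<close> in \<open>S\<^sub>2\<^sub>e\<^sub>'(T)\<close> comes from the
  hypothesis, the previous lemma, and a vertical shift of the identification defining \<open>z'\<close>.\<close>

lemma comp_is_eta_smooth_eta:
  assumes lpc: "locally_path_connected_space T" and F: "continuous_map T euclideanreal F"
    and e: "0 \<le> e" "e < e'"
    and \<phi>: "to_tsmooth T F T' F' m e \<phi>" and \<psi>: "to_tsmooth T' F' T F m e \<psi>"
    and comp: "comp_is_eta T F T' F' e \<phi> \<psi>"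
  shows "comp_is_eta T F T' F' e' (smooth_eta T' F' e' \<circ> \<phi>) (smooth_eta T F e' \<circ> \<psi>)"
  unfolding comp_is_eta_def
proof (intro ballI allI impI)
  fix x y' t' z' s'
  assume x: "x \<in> topspace T"
    and y': "y' \<in> topspace T' \<and> t' \<in> {-e'..e'} \<and> (smooth_eta T' F' e' \<circ> \<phi>) x = smooth_pt T' F' e' y' t'"
    and z': "z' \<in> topspace T \<and> s' \<in> {-e'..e'} \<and> (smooth_eta T F e' \<circ> \<psi>) y' = smooth_pt T F e' z' s'"
  note \<phi>D = to_tsmoothD[OF \<phi>] and \<psi>D = to_tsmoothD[OF \<psi>]
  define y0 where "y0 = fst (SOME p. p \<in> \<phi> x)"
  define t0 where "t0 = snd (SOME p. p \<in> \<phi> x)"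
  define z0 where "z0 = fst (SOME p. p \<in> \<psi> y0)"
  define s0 where "s0 = snd (SOME p. p \<in> \<psi> y0)"
  define z1 where "z1 = fst (SOME p. p \<in> \<psi> y')"
  define s1 where "s1 = snd (SOME p. p \<in> \<psi> y')"
  note rep\<phi> = smooth_top_rep[OF \<phi>D(3)[OF x], folded y0_def t0_def]
  note rep\<psi>0 = smooth_top_rep[OF \<psi>D(3)[OF rep\<phi>(1)], folded z0_def s0_def]
  note rep\<psi>1 = smooth_top_rep[OF \<psi>D(3)[OF conjunct1[OF y']], folded z1_def s1_def]
  have "smooth_pt T F (2 * e) z0 (s0 + t0) = smooth_pt T F (2 * e) x 0"
    using comp x rep\<phi>(1,2,3) rep\<psi>0(1,2,3) unfolding comp_is_eta_def by (auto simp: abs_le_iff)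
  then have "reeb_rel (smooth_space T (2 * e)) (smooth_f F) (x, 0) (z0, s0 + t0)"
    using smooth_pt_eq_iff[OF x, of 0 "2 * e" F z0 "s0 + t0"] e by simp
  then have "reeb_rel (smooth_space T (2 * e')) (smooth_f F) (x, 0) (z0, s0 + t0)"
    by (rule reeb_rel_smooth_mono) (use e in simp)
  moreover have "reeb_rel (smooth_space T (2 * e')) (smooth_f F) (z0, s0 + t0) (z1, s1 + t')"
  proof -
    have "smooth_pt T' F' e' y0 t0 = smooth_pt T' F' e' y' t'"
      using y' unfolding smooth_eta_def y0_def t0_def by simp
    then have "reeb_rel (smooth_space T' e') (smooth_f F') (y0, t0) (y', t')"
      using smooth_pt_eq_iff[OF rep\<phi>(1), of t0 e' F'] rep\<phi>(2) e by simp
    then show ?thesis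
      unfolding z0_def s0_def z1_def s1_def
      by (rule reeb_rel_smooth_morphism_reps[OF lpc F \<open>e < e'\<close> \<psi>])
  qed
  moreover have "reeb_rel (smooth_space T (2 * e')) (smooth_f F) (z1, s1 + t') (z', s' + t')"
  proof -
    have "smooth_pt T F e' z1 s1 = smooth_pt T F e' z' s'"
      using z' unfolding smooth_eta_def z1_def s1_def by simp
    then have "reeb_rel (smooth_space T e') (smooth_f F) (z1, s1) (z', s')"
      using smooth_pt_eq_iff[OF rep\<psi>1(1), of s1 e' F] rep\<psi>1(2) e by simp
    then show ?thesis
      by (rule reeb_rel_smooth_shift) (use y' in \<open>auto simp: abs_le_iff\<close>)
  qed
  ultimately have "reeb_rel (smooth_space T (2 * e')) (smooth_f F) (x, 0) (z', s' + t')"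
    by (blast intro: reeb_rel_trans)
  then show "smooth_pt T F (2 * e') z' (s' + t') = smooth_pt T F (2 * e') x 0"
    using smooth_pt_eq_iff[OF x, of 0 "2 * e'" F z' "s' + t'"] e by simp
qed

lemma interleaving_rescale:
  assumes lpc: "locally_path_connected_space T" "locally_path_connected_space T'"
    and F: "continuous_map T euclideanreal F" "continuous_map T' euclideanreal F'"
    and M: "0 \<le> M" "M \<le> M'" "M' < 1" and "0 \<le> e"
    and I: "interleaving M e T F T' F' \<phi> \<psi>"
  shows "\<exists>\<phi> \<psi>. interleaving M' ((1 - M) / (1 - M') * e) T F T' F' \<phi> \<psi>"
proof -
  define e' where "e' = (1 - M) / (1 - M') * e"
  have "e \<le> e'"
    unfolding e'_def using M \<open>0 \<le> e\<close> by (simp add: field_simps mult_right_mono)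
  have heights: "M' * e' = M * e + (e' - e)"
    unfolding e'_def using M by (simp add: field_simps)
  show ?thesis
  proof (cases "e = e'")
    case True
    then have heights_eq: "M' * e' = M * e" using heights by simp
    have "interleaving M' e' T F T' F' \<phi> \<psi>"
      using I unfolding interleaving_def to_tsmooth_def True heights_eq .
    then show ?thesis unfolding e'_def by blast
  next
    case False
    with \<open>e \<le> e'\<close> have "e < e'" by simp
    have "interleaving M' e' T F T' F' (smooth_eta T' F' e' \<circ> \<phi>) (smooth_eta T F e' \<circ> \<psi>)"
      using I \<open>e < e'\<close> heights
        to_tsmooth_smooth_eta[of T F T' F' M e \<phi> e' M'] to_tsmooth_smooth_eta[of T' F' T F M e \<psi> e' M']
        comp_is_eta_smooth_eta[OF lpc(1) F(1) \<open>0 \<le> e\<close> \<open>e < e'\<close>, of T' F' M \<phi> \<psi>]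
        comp_is_eta_smooth_eta[OF lpc(2) F(2) \<open>0 \<le> e\<close> \<open>e < e'\<close>, of T F M \<psi> \<phi>]
      unfolding interleaving_def by auto
    then show ?thesis unfolding e'_def by blast
  qed
qed

section \<open>Constructible Reeb graphs\<close>

lemma locally_path_connected_space_pieces_top:
  assumes "\<forall>i<n. locally_path_connected_space (V i)"
    and "\<forall>i. Suc i < n \<longrightarrow> locally_path_connected_space (E i)"
  shows "locally_path_connected_space (pieces_top n a V E)"
  unfolding pieces_top_def locally_path_connected_space_sum_topology
proof (intro ballI)
  fix ib
  assume ib: "ib \<in> {(i, False) | i. i < n} \<union> {(i, True) | i. Suc i < n}"
  have point: "locally_path_connected_space (subtopology euclideanreal {a i})" for i
    using locally_path_connected_real_interval(1)[of "a i" "a i"] by simp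
  show "locally_path_connected_space
          ((\<lambda>(i, b). if b then prod_topology (E i) (subtopology euclideanreal {a i..a (Suc i)})
                      else prod_topology (V i) (subtopology euclideanreal {a i})) ib)"
    using ib assms point locally_path_connected_real_interval(1)
    by (auto simp: locally_path_connected_space_prod_topology)
qed

lemma constructible_imp_locally_path_connected_space:
  assumes "constructible TYPE('c) X f"
  shows "locally_path_connected_space X"
proof -
  obtain n a l r h and V E :: "nat \<Rightarrow> 'c topology" where
    "\<forall>i<n. locally_path_connected_space (V i)"
    "\<forall>i. Suc i < n \<longrightarrow> locally_path_connected_space (E i)"
    "homeomorphic_map X (glued_top n a V E l r) h"
    using assms unfolding constructible_def by metis
  then show ?thesis
    using locally_path_connected_space_quot_top[OF locally_path_connected_space_pieces_top]
      homeomorphic_locally_path_connected_space homeomorphic_map_imp_homeomorphic_space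
    unfolding glued_top_def by metis
qed

lemma constructible_reeb_graph:
  assumes "constructible TYPE('c) X f"
  shows "locally_path_connected_space (reeb_top X f)"
    "continuous_map (reeb_top X f) euclideanreal (reeb_fn X f)"
proof -
  show "locally_path_connected_space (reeb_top X f)"
    unfolding reeb_top_def
    by (rule locally_path_connected_space_quot_top[OF constructible_imp_locally_path_connected_space[OF assms]])
  have "continuous_map X euclideanreal f"
    using assms unfolding constructible_def by blast
  then show "continuous_map (reeb_top X f) euclideanreal (reeb_fn X f)"
    by (rule continuous_map_reeb_fn)
qed

lemma Inf_ereal_rescale_le:
  fixes S S' :: "ereal set" and k :: real
  assumes "0 < k" and nonneg: "\<And>y. y \<in> S \<Longrightarrow> 0 \<le> y"
    and rescale: "\<And>e. ereal e \<in> S \<Longrightarrow> ereal (k * e) \<in> S'"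
  shows "Inf S' \<le> ereal k * Inf S"
proof (cases "Inf S")
  case (real i)
  show ?thesis
  proof (rule ereal_le_epsilon2)
    fix \<epsilon> :: real
    assume "0 < \<epsilon>"
    then have "Inf S < ereal (i + \<epsilon> / k)" using real \<open>0 < k\<close> by simp
    then obtain y where y: "y \<in> S" "y < ereal (i + \<epsilon> / k)" unfolding Inf_less_iff by blast
    then obtain e where e: "y = ereal e" "e \<le> i + \<epsilon> / k"
      using nonneg[OF y(1)] by (cases y) auto
    have "Inf S' \<le> ereal (k * e)" using rescale y(1) e(1) by (simp add: Inf_lower)
    also have "\<dots> \<le> ereal (k * (i + \<epsilon> / k))"
      using mult_left_mono[OF e(2), of k] \<open>0 < k\<close> by simp
    also have "\<dots> = ereal (k * i + \<epsilon>)"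
      using \<open>0 < k\<close> by (simp add: field_simps)
    finally show "Inf S' \<le> ereal k * Inf S + ereal \<epsilon>" using real by simp
  qed
next
  case PInf
  then show ?thesis using \<open>0 < k\<close> by simp
next
  case MInf
  then show ?thesis using nonneg Inf_greatest[of S 0] by simp
qed

theorem mainTheorem2:
  fixes X :: "'a topology" and f :: "'a \<Rightarrow> real"
    and Y :: "'b topology" and g :: "'b \<Rightarrow> real"
    and M M' :: real
  assumes "constructible TYPE('c) X f"
    and "constructible TYPE('d) Y g"
    and "0 \<le> M" and "M \<le> M'" and "M' < 1"
  shows "trunc_dist M (reeb_top X f) (reeb_fn X f) (reeb_top Y g) (reeb_fn Y g)
           \<le> trunc_dist M' (reeb_top X f) (reeb_fn X f) (reeb_top Y g) (reeb_fn Y g)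
       \<and> trunc_dist M' (reeb_top X f) (reeb_fn X f) (reeb_top Y g) (reeb_fn Y g)
           \<le> ereal ((1 - M) / (1 - M'))
              * trunc_dist M (reeb_top X f) (reeb_fn X f) (reeb_top Y g) (reeb_fn Y g)"
proof -
  note Rf = constructible_reeb_graph[OF assms(1)] and Rg = constructible_reeb_graph[OF assms(2)]
  define D where "D m = {ereal e |e. e \<ge> 0 \<and>
    (\<exists>\<phi> \<psi>. interleaving m e (reeb_top X f) (reeb_fn X f) (reeb_top Y g) (reeb_fn Y g) \<phi> \<psi>)}" for m
  have "D M' \<subseteq> D M"
    unfolding D_def using interleaving_antimono[OF _ assms(3,4) _ Rf(2) Rg(2)] by blast
  moreover have "Inf (D M') \<le> ereal ((1 - M) / (1 - M')) * Inf (D M)"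
  proof (rule Inf_ereal_rescale_le)
    show "0 < (1 - M) / (1 - M')" using assms(4,5) by simp
    show "0 \<le> y" if "y \<in> D M" for y using that unfolding D_def by auto
    show "ereal ((1 - M) / (1 - M') * e) \<in> D M'" if "ereal e \<in> D M" for e
      using that interleaving_rescale[OF Rf(1) Rg(1) Rf(2) Rg(2) assms(3-5)] assms(4,5)
      unfolding D_def by auto
  qed
  ultimately show ?thesis
    unfolding trunc_dist_def D_def[symmetric] by (simp add: Inf_superset_mono)
qed

end
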